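(* Assume the standing assumptions and fix a function $h$ satisfying (h1)–(h4). Let $\tau=\min\{n\ge1:S_n\le0\}$ and suppose $\lim_{x\to\infty}\delta_\tau(x)=0$. Then for every stopping time $\sigma$ (with respect to an admissible filtration) with $\mathbf E\sigma<\infty$, we have $\lim_{x\to\infty}\delta_\sigma(x)=0$.
   Context: Standing assumptions: $\{\xi_n\}_{n\ge1}$ are i.i.d. real random variables with common distribution function $F$ and finite mean $\mathbf E\xi_1=-m<0$. $F$ is long-tailed: $\overline F(x)=1-F(x)>0$ for all $x$, and $\overline F(x-c)/\overline F(x)\to1$ as $x\to\infty$ for every fixed $c>0$. Notation: $S_0=0$ and $S_n=\sum_{i=1}^n\xi_i$. Admissible filtration: stopping times are taken with respect to a filtration $\{\mathcal F_n\}_{n\ge0}$ such that $\xi_n$ is $\mathcal F_n$-measurable and $\xi_{n+1}$ is independent of $\mathcal F_n$. The function $h:\mathbb R_+\to\mathbb R_+$ satisfies: - (h1) $h(x)\le x/2$; - (h2) $h(x)\to\infty$; - (h3) $\overline F(x-h(x))/\overline F(x)\to1$ as $x\to\infty$; - (h4) there exists $x_0$ with $h(x+t)\le h(x)+t$ for all $x\ge x_0$, $t\ge0$. For $x\ge0$, let $\mu(x)=\min\{n:S_n>x\}$, with $\min\emptyset=\infty$. For a stopping time $\sigma$, define $$A_{\sigma,2}(x)=\{\mu(x)\le\sigma,\ S_{\mu(x)-1}>h(x)\},\qquad \delta_\sigma(x)=\sup_{y\ge x}\frac{\mathbf P(A_{\sigma,2}(y))}{\overline F(y)}.$$ *)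

theory Defs
  imports "HOL-Probability.Probability"
begin

definition rw :: "(nat \<Rightarrow> 'a \<Rightarrow> real) \<Rightarrow> nat \<Rightarrow> 'a \<Rightarrow> real" where
  "rw \<xi> n \<omega> = (\<Sum>i\<in>{1..n}. \<xi> i \<omega>)"

definition Fbar :: "'a measure \<Rightarrow> (nat \<Rightarrow> 'a \<Rightarrow> real) \<Rightarrow> real \<Rightarrow> real" where
  "Fbar M \<xi> x = measure M {\<omega> \<in> space M. \<xi> 1 \<omega> > x}"

definition mu :: "(nat \<Rightarrow> 'a \<Rightarrow> real) \<Rightarrow> real \<Rightarrow> 'a \<Rightarrow> enat" where
  "mu \<xi> x \<omega> = (if \<exists>n. rw \<xi> n \<omega> > x then enat (LEAST n. rw \<xi> n \<omega> > x) else \<infinity>)"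

definition tau :: "(nat \<Rightarrow> 'a \<Rightarrow> real) \<Rightarrow> 'a \<Rightarrow> enat" where
  "tau \<xi> \<omega> = (if \<exists>n. n \<ge> 1 \<and> rw \<xi> n \<omega> \<le> 0
                 then enat (LEAST n. n \<ge> 1 \<and> rw \<xi> n \<omega> \<le> 0) else \<infinity>)"

definition A2 :: "'a measure \<Rightarrow> (nat \<Rightarrow> 'a \<Rightarrow> real) \<Rightarrow> (real \<Rightarrow> real) \<Rightarrow> ('a \<Rightarrow> enat)
    \<Rightarrow> real \<Rightarrow> 'a set" where
  "A2 M \<xi> h \<sigma> x = {\<omega> \<in> space M. \<exists>n. mu \<xi> x \<omega> = enat n \<and> enat n \<le> \<sigma> \<omega>
                                     \<and> rw \<xi> (n - 1) \<omega> > h x}"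

definition delta :: "'a measure \<Rightarrow> (nat \<Rightarrow> 'a \<Rightarrow> real) \<Rightarrow> (real \<Rightarrow> real) \<Rightarrow> ('a \<Rightarrow> enat)
    \<Rightarrow> real \<Rightarrow> ereal" where
  "delta M \<xi> h \<sigma> x = (SUP y\<in>{x..}. ereal (measure M (A2 M \<xi> h \<sigma> y) / Fbar M \<xi> y))"

definition admissible_filtration :: "'a measure \<Rightarrow> (nat \<Rightarrow> 'a \<Rightarrow> real) \<Rightarrow> (nat \<Rightarrow> 'a measure) \<Rightarrow> bool" where
  "admissible_filtration M \<xi> F \<longleftrightarrow>
     (\<forall>n. subalgebra M (F n)) \<and>
     (\<forall>n m. n \<le> m \<longrightarrow> sets (F n) \<subseteq> sets (F m)) \<and>
     (\<forall>n\<ge>1. \<xi> n \<in> borel_measurable (F n)) \<and>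
     (\<forall>n. prob_space.indep_set M (sets (F n))
             {\<xi> (Suc n) -` A \<inter> space M | A. A \<in> sets borel})"

definition stopping_time_enat :: "'a measure \<Rightarrow> (nat \<Rightarrow> 'a measure) \<Rightarrow> ('a \<Rightarrow> enat) \<Rightarrow> bool" where
  "stopping_time_enat M F \<sigma> \<longleftrightarrow> (\<forall>n::nat. {\<omega> \<in> space M. \<sigma> \<omega> \<le> enat n} \<in> sets (F n))"

end

theory Submission
  imports Defs
begin

text \<open>Decompose a path of A_{\<sigma>,2}(y) at the last time k < \<mu>(y) at which the walk attains its
  running minimum. Then k < \<sigma>, the event {k < \<sigma>, S_k = min_{l \<le> k} S_l} is F_k-measurable, and
  after time k the walk stays above S_k \<le> 0 until it exceeds y - S_k \<ge> y, jumping from a position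
  above h(y) - S_k \<ge> h(y - S_k) by (h4). By the Markov property at time k this has conditional
  probability at most P(A_{\<tau>,2}(y - S_k)) \<le> \<delta>_\<tau>(y) Fbar(y). Summing over k gives
  P(A_{\<sigma>,2}(y)) \<le> \<delta>_\<tau>(y) Fbar(y) \<Sum>_k P(\<sigma> > k) = E \<sigma> \<delta>_\<tau>(y) Fbar(y), hence \<delta>_\<sigma> \<le> E \<sigma> \<delta>_\<tau>.\<close>

text \<open>\<open>exits_above \<xi> L H k N W\<close>: the walk started at \<open>W\<close> with steps \<open>\<xi>(k+1), \<xi>(k+2), \<dots>\<close> leaves
  \<open>(0, L]\<close> upwards within \<open>N\<close> steps, from a position above \<open>H\<close>. \<open>exit_prob D N L H s\<close> is the
  probability of this event for i.i.d.\ steps of law \<open>D\<close> started at \<open>s\<close>.\<close>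

fun exit_prob :: "real measure \<Rightarrow> nat \<Rightarrow> real \<Rightarrow> real \<Rightarrow> real \<Rightarrow> ennreal" where
  "exit_prob D 0 L H s = 0"
| "exit_prob D (Suc N) L H s = (\<integral>\<^sup>+y. (if L < s + y \<and> H < s then 1 else 0)
      + (if 0 < s + y \<and> s + y \<le> L then exit_prob D N L H (s + y) else 0) \<partial>D)"

fun exits_above :: "(nat \<Rightarrow> 'a \<Rightarrow> real) \<Rightarrow> real \<Rightarrow> real \<Rightarrow> nat \<Rightarrow> nat \<Rightarrow> real \<Rightarrow> 'a \<Rightarrow> bool" where
  "exits_above \<xi> L H k 0 W \<omega> = False"
| "exits_above \<xi> L H k (Suc N) W \<omega> \<longleftrightarrow> (L < W + \<xi> (Suc k) \<omega> \<and> H < W) \<or>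
     (0 < W + \<xi> (Suc k) \<omega> \<and> W + \<xi> (Suc k) \<omega> \<le> L \<and> exits_above \<xi> L H (Suc k) N (W + \<xi> (Suc k) \<omega>) \<omega>)"

lemma borel_measurable_exit_prob_triple:
  assumes "sigma_finite_measure D" "sets D = sets borel"
  shows "(\<lambda>z::real\<times>real\<times>real. exit_prob D n (fst z) (fst (snd z)) (snd (snd z)))
    \<in> borel_measurable (borel \<Otimes>\<^sub>M (borel \<Otimes>\<^sub>M borel))"
proof (induction n)
  case 0 then show ?case by simp
next
  case (Suc n)
  interpret D: sigma_finite_measure D by fact
  have [measurable_cong]: "sets D = sets borel" by fact
  have shift: "(\<lambda>p::(real\<times>real\<times>real)\<times>real. (fst (fst p), fst (snd (fst p)), snd (snd (fst p)) + snd p))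
     \<in> measurable ((borel \<Otimes>\<^sub>M (borel \<Otimes>\<^sub>M borel)) \<Otimes>\<^sub>M D) (borel \<Otimes>\<^sub>M (borel \<Otimes>\<^sub>M borel))"
    by measurable
  have [measurable]: "(\<lambda>p::(real\<times>real\<times>real)\<times>real.
      exit_prob D n (fst (fst p)) (fst (snd (fst p))) (snd (snd (fst p)) + snd p))
     \<in> borel_measurable ((borel \<Otimes>\<^sub>M (borel \<Otimes>\<^sub>M borel)) \<Otimes>\<^sub>M D)"
    using measurable_compose[OF shift Suc.IH] by simp
  show ?case
    by simp measurable
qed

lemma borel_measurable_exit_prob:
  assumes "sigma_finite_measure D" "sets D = sets borel"
    and "f \<in> borel_measurable N0" "g \<in> borel_measurable N0" "w \<in> borel_measurable N0"
  shows "(\<lambda>x. exit_prob D n (f x) (g x) (w x)) \<in> borel_measurable N0"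
proof -
  have "(\<lambda>x. (f x, g x, w x)) \<in> measurable N0 (borel \<Otimes>\<^sub>M (borel \<Otimes>\<^sub>M borel))"
    using assms(3-5) by measurable
  from measurable_compose[OF this borel_measurable_exit_prob_triple[OF assms(1,2), of n]]
  show ?thesis by simp
qed

lemma pred_exits_above:
  assumes "\<And>j. \<xi> (Suc j) \<in> borel_measurable N0"
  shows "Lf \<in> borel_measurable N0 \<Longrightarrow> Hf \<in> borel_measurable N0 \<Longrightarrow> Wf \<in> borel_measurable N0 \<Longrightarrow>
    Measurable.pred N0 (\<lambda>\<omega>. exits_above \<xi> (Lf \<omega>) (Hf \<omega>) k N (Wf \<omega>) \<omega>)"
proof (induction N arbitrary: k Wf)
  case 0 then show ?case by simp
next
  case (Suc N)
  have [measurable]: "Lf \<in> borel_measurable N0" "Hf \<in> borel_measurable N0" "Wf \<in> borel_measurable N0"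
    "\<xi> (Suc k) \<in> borel_measurable N0" using Suc.prems assms by auto
  have [measurable]:
    "Measurable.pred N0 (\<lambda>\<omega>. exits_above \<xi> (Lf \<omega>) (Hf \<omega>) (Suc k) N (Wf \<omega> + \<xi> (Suc k) \<omega>) \<omega>)"
    by (rule Suc.IH) measurable
  show ?case by simp measurable
qed

lemma exits_above_Suc_mono: "exits_above \<xi> L H k N W \<omega> \<Longrightarrow> exits_above \<xi> L H k (Suc N) W \<omega>"
  by (induction N arbitrary: k W) auto

lemma rw_0 [simp]: "rw \<xi> 0 \<omega> = 0"
  by (simp add: rw_def)

lemma rw_Suc: "rw \<xi> (Suc n) \<omega> = rw \<xi> n \<omega> + \<xi> (Suc n) \<omega>"
  by (simp add: rw_def)

definition rw_incr :: "(nat \<Rightarrow> 'a \<Rightarrow> real) \<Rightarrow> nat \<Rightarrow> nat \<Rightarrow> 'a \<Rightarrow> real" where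
  "rw_incr \<xi> k i \<omega> = rw \<xi> (k + i) \<omega> - rw \<xi> k \<omega>"

lemma rw_incr_0 [simp]: "rw_incr \<xi> k 0 \<omega> = 0"
  by (simp add: rw_incr_def)

lemma rw_incr_Suc: "rw_incr \<xi> k (Suc i) \<omega> = \<xi> (Suc k) \<omega> + rw_incr \<xi> (Suc k) i \<omega>"
  by (simp add: rw_incr_def rw_Suc)

lemma rw_incr_from_0: "rw_incr \<xi> 0 i \<omega> = rw \<xi> i \<omega>"
  by (simp add: rw_incr_def)

definition exits_at :: "(nat \<Rightarrow> 'a \<Rightarrow> real) \<Rightarrow> real \<Rightarrow> real \<Rightarrow> nat \<Rightarrow> real \<Rightarrow> nat \<Rightarrow> 'a \<Rightarrow> bool" where
  "exits_at \<xi> L H k W m \<omega> \<longleftrightarrow> 1 \<le> m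
     \<and> (\<forall>i. 1 \<le> i \<and> i < m \<longrightarrow> 0 < W + rw_incr \<xi> k i \<omega> \<and> W + rw_incr \<xi> k i \<omega> \<le> L)
     \<and> L < W + rw_incr \<xi> k m \<omega> \<and> H < W + rw_incr \<xi> k (m - 1) \<omega>"

lemma exits_at_ge_1: "exits_at \<xi> L H k W m \<omega> \<Longrightarrow> 1 \<le> m"
  by (simp add: exits_at_def)

lemma exits_at_1: "exits_at \<xi> L H k W 1 \<omega> \<longleftrightarrow> L < W + \<xi> (Suc k) \<omega> \<and> H < W"
  by (simp add: exits_at_def rw_incr_Suc[of _ _ 0, simplified])

lemma exits_at_Suc:
  assumes "1 \<le> m"
  shows "exits_at \<xi> L H k W (Suc m) \<omega> \<longleftrightarrow>
    0 < W + \<xi> (Suc k) \<omega> \<and> W + \<xi> (Suc k) \<omega> \<le> L \<and> exits_at \<xi> L H (Suc k) (W + \<xi> (Suc k) \<omega>) m \<omega>"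
proof -
  let ?W' = "W + \<xi> (Suc k) \<omega>"
  have inside: "(\<forall>i. 1 \<le> i \<and> i < Suc m \<longrightarrow> 0 < W + rw_incr \<xi> k i \<omega> \<and> W + rw_incr \<xi> k i \<omega> \<le> L)
    \<longleftrightarrow> (0 < ?W' \<and> ?W' \<le> L) \<and>
     (\<forall>i. 1 \<le> i \<and> i < m \<longrightarrow> 0 < ?W' + rw_incr \<xi> (Suc k) i \<omega> \<and> ?W' + rw_incr \<xi> (Suc k) i \<omega> \<le> L)"
    (is "?lhs \<longleftrightarrow> ?first \<and> ?rest")
  proof
    assume lhs: ?lhs
    have "?first" using lhs[rule_format, of 1] assms by (simp add: rw_incr_Suc[of _ _ 0, simplified])
    moreover have "?rest" using lhs[rule_format, of "Suc _"] by (auto simp: rw_incr_Suc add.assoc)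
    ultimately show "?first \<and> ?rest" ..
  next
    assume rhs: "?first \<and> ?rest"
    show ?lhs
    proof (intro allI impI)
      fix i assume i: "1 \<le> i \<and> i < Suc m"
      then obtain i' where i': "i = Suc i'" by (cases i) auto
      show "0 < W + rw_incr \<xi> k i \<omega> \<and> W + rw_incr \<xi> k i \<omega> \<le> L"
        using rhs i i' by (cases "i' = 0") (auto simp: rw_incr_Suc add.assoc)
    qed
  qed
  have "rw_incr \<xi> k (Suc m - 1) \<omega> = \<xi> (Suc k) \<omega> + rw_incr \<xi> (Suc k) (m - 1) \<omega>"
    using assms rw_incr_Suc[of \<xi> k "m - 1" \<omega>] by simp
  then show ?thesis
    unfolding exits_at_def inside rw_incr_Suc using assms by (auto simp: add.assoc)
qed

lemma exits_above_iff: "exits_above \<xi> L H k N W \<omega> \<longleftrightarrow> (\<exists>m\<le>N. exits_at \<xi> L H k W m \<omega>)"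
proof (induction N arbitrary: k W)
  case 0 then show ?case by (auto simp: exits_at_def)
next
  case (Suc N)
  have "(\<exists>m\<le>Suc N. exits_at \<xi> L H k W m \<omega>) \<longleftrightarrow>
      exits_at \<xi> L H k W 1 \<omega> \<or> (\<exists>m\<le>N. 1 \<le> m \<and> exits_at \<xi> L H k W (Suc m) \<omega>)"
  proof
    assume "\<exists>m\<le>Suc N. exits_at \<xi> L H k W m \<omega>"
    then obtain m where m: "m \<le> Suc N" "exits_at \<xi> L H k W m \<omega>" "1 \<le> m"
      by (auto simp: exits_at_def)
    show "exits_at \<xi> L H k W 1 \<omega> \<or> (\<exists>m\<le>N. 1 \<le> m \<and> exits_at \<xi> L H k W (Suc m) \<omega>)"
    proof (cases "m = 1")
      case False
      with m obtain m' where "m = Suc m'" "1 \<le> m'" by (cases m) auto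
      with m show ?thesis by auto
    qed (use m in simp)
  qed auto
  also have "\<dots> \<longleftrightarrow> exits_above \<xi> L H k (Suc N) W \<omega>"
  proof -
    have "(\<exists>m\<le>N. 1 \<le> m \<and> exits_at \<xi> L H k W (Suc m) \<omega>) \<longleftrightarrow>
        0 < W + \<xi> (Suc k) \<omega> \<and> W + \<xi> (Suc k) \<omega> \<le> L
        \<and> (\<exists>m\<le>N. exits_at \<xi> L H (Suc k) (W + \<xi> (Suc k) \<omega>) m \<omega>)"
    proof
      assume "\<exists>m\<le>N. 1 \<le> m \<and> exits_at \<xi> L H k W (Suc m) \<omega>"
      then obtain m where m: "m \<le> N" "1 \<le> m" "exits_at \<xi> L H k W (Suc m) \<omega>" by blast
      then show "0 < W + \<xi> (Suc k) \<omega> \<and> W + \<xi> (Suc k) \<omega> \<le> L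
        \<and> (\<exists>m\<le>N. exits_at \<xi> L H (Suc k) (W + \<xi> (Suc k) \<omega>) m \<omega>)"
        using exits_at_Suc[OF m(2), of \<xi> L H k W \<omega>] by auto
    next
      assume "0 < W + \<xi> (Suc k) \<omega> \<and> W + \<xi> (Suc k) \<omega> \<le> L
        \<and> (\<exists>m\<le>N. exits_at \<xi> L H (Suc k) (W + \<xi> (Suc k) \<omega>) m \<omega>)"
      then obtain m where m: "m \<le> N" "exits_at \<xi> L H (Suc k) (W + \<xi> (Suc k) \<omega>) m \<omega>"
        and "0 < W + \<xi> (Suc k) \<omega>" "W + \<xi> (Suc k) \<omega> \<le> L" by blast
      moreover have "1 \<le> m" using m(2) by (rule exits_at_ge_1)
      ultimately show "\<exists>m\<le>N. 1 \<le> m \<and> exits_at \<xi> L H k W (Suc m) \<omega>"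
        using exits_at_Suc[OF \<open>1 \<le> m\<close>, of \<xi> L H k W \<omega>] by auto
    qed
    then show ?thesis by (simp only: exits_above.simps Suc.IH exits_at_1)
  qed
  finally show ?case ..
qed

lemma mu_eq_enat_iff: "mu \<xi> x \<omega> = enat n \<longleftrightarrow> (\<forall>i<n. rw \<xi> i \<omega> \<le> x) \<and> x < rw \<xi> n \<omega>"
proof
  assume mu: "mu \<xi> x \<omega> = enat n"
  then have ex: "\<exists>n. rw \<xi> n \<omega> > x" by (auto simp: mu_def split: if_splits)
  then have "n = (LEAST n. rw \<xi> n \<omega> > x)" using mu by (simp add: mu_def)
  then show "(\<forall>i<n. rw \<xi> i \<omega> \<le> x) \<and> x < rw \<xi> n \<omega>"
    using LeastI_ex[OF ex] not_less_Least[of _ "\<lambda>n. rw \<xi> n \<omega> > x"] by (auto simp: not_less)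
next
  assume first: "(\<forall>i<n. rw \<xi> i \<omega> \<le> x) \<and> x < rw \<xi> n \<omega>"
  then have "(LEAST n. rw \<xi> n \<omega> > x) = n"
    by (intro Least_equality) (auto simp: not_less[symmetric])
  then show "mu \<xi> x \<omega> = enat n" using first by (auto simp: mu_def)
qed

lemma enat_le_tau_iff: "enat n \<le> tau \<xi> \<omega> \<longleftrightarrow> (\<forall>i. 1 \<le> i \<and> i < n \<longrightarrow> 0 < rw \<xi> i \<omega>)"
proof (cases "\<exists>n. n \<ge> 1 \<and> rw \<xi> n \<omega> \<le> 0")
  case True
  let ?l = "LEAST n. n \<ge> 1 \<and> rw \<xi> n \<omega> \<le> 0"
  have l: "?l \<ge> 1" "rw \<xi> ?l \<omega> \<le> 0" using LeastI_ex[OF True] by auto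
  have before: "\<And>j. j < ?l \<Longrightarrow> \<not> (j \<ge> 1 \<and> rw \<xi> j \<omega> \<le> 0)" by (rule not_less_Least)
  have "n \<le> ?l \<longleftrightarrow> (\<forall>i. 1 \<le> i \<and> i < n \<longrightarrow> 0 < rw \<xi> i \<omega>)"
  proof
    assume "n \<le> ?l"
    then show "\<forall>i. 1 \<le> i \<and> i < n \<longrightarrow> 0 < rw \<xi> i \<omega>"
      using before by (meson less_le_trans not_le)
  next
    assume "\<forall>i. 1 \<le> i \<and> i < n \<longrightarrow> 0 < rw \<xi> i \<omega>"
    then show "n \<le> ?l" using l by (meson not_le not_less)
  qed
  then show ?thesis using True by (simp add: tau_def)
next
  case False
  then have "tau \<xi> \<omega> = \<infinity>" by (simp add: tau_def)
  moreover have "\<forall>i. 1 \<le> i \<longrightarrow> 0 < rw \<xi> i \<omega>" using False by (meson not_le)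
  ultimately show ?thesis by simp
qed

lemma exits_above_from_0_in_A2_tau:
  assumes "0 \<le> L" "h L \<le> H" "\<omega> \<in> space M" "exits_above \<xi> L H 0 N 0 \<omega>"
  shows "\<omega> \<in> A2 M \<xi> h (tau \<xi>) L"
proof -
  obtain m where "exits_at \<xi> L H 0 0 m \<omega>" using assms(4) exits_above_iff by metis
  then have m: "1 \<le> m" "\<And>i. 1 \<le> i \<Longrightarrow> i < m \<Longrightarrow> 0 < rw \<xi> i \<omega> \<and> rw \<xi> i \<omega> \<le> L"
     "L < rw \<xi> m \<omega>" "H < rw \<xi> (m - 1) \<omega>"
    unfolding exits_at_def rw_incr_from_0 by auto
  have "\<forall>i<m. rw \<xi> i \<omega> \<le> L"
    using m(2) assms(1) by (metis less_one not_le rw_0)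
  then have "mu \<xi> L \<omega> = enat m" using m(3) mu_eq_enat_iff by metis
  moreover have "enat m \<le> tau \<xi> \<omega>" using m(2) enat_le_tau_iff by metis
  ultimately show ?thesis unfolding A2_def using assms(2,3) m(4) by auto
qed

definition ladder_event :: "'a measure \<Rightarrow> (nat \<Rightarrow> 'a \<Rightarrow> real) \<Rightarrow> ('a \<Rightarrow> enat) \<Rightarrow> nat \<Rightarrow> 'a set" where
  "ladder_event M \<xi> \<sigma> k = {\<omega>\<in>space M. enat k < \<sigma> \<omega> \<and> (\<forall>l\<le>k. rw \<xi> k \<omega> \<le> rw \<xi> l \<omega>)}"

definition exit_event ::
    "'a measure \<Rightarrow> (nat \<Rightarrow> 'a \<Rightarrow> real) \<Rightarrow> (real \<Rightarrow> real) \<Rightarrow> real \<Rightarrow> nat \<Rightarrow> nat \<Rightarrow> 'a set" where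
  "exit_event M \<xi> h y k N = {\<omega>\<in>space M. exits_above \<xi> (y - rw \<xi> k \<omega>) (h y - rw \<xi> k \<omega>) k N 0 \<omega>}"

lemma exit_event_Suc_mono: "exit_event M \<xi> h y k N \<subseteq> exit_event M \<xi> h y k (Suc N)"
  unfolding exit_event_def by (auto intro: exits_above_Suc_mono simp del: exits_above.simps)

lemma A2_subset_UN_ladder_exit:
  assumes "0 \<le> y"
  shows "A2 M \<xi> h \<sigma> y \<subseteq> (\<Union>N. \<Union>k<N. ladder_event M \<xi> \<sigma> k \<inter> exit_event M \<xi> h y k N)"
proof
  fix \<omega> assume "\<omega> \<in> A2 M \<xi> h \<sigma> y"
  then obtain n where \<omega>: "\<omega> \<in> space M" and mu: "mu \<xi> y \<omega> = enat n" and "enat n \<le> \<sigma> \<omega>"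
    and hy: "h y < rw \<xi> (n - 1) \<omega>"
    unfolding A2_def by blast
  have below: "\<forall>i<n. rw \<xi> i \<omega> \<le> y" and above: "y < rw \<xi> n \<omega>" using mu mu_eq_enat_iff by metis+
  have "n \<noteq> 0" using above assms by (cases "n = 0") auto
  define P where "P i \<longleftrightarrow> i < n \<and> (\<forall>l<n. rw \<xi> i \<omega> \<le> rw \<xi> l \<omega>)" for i
  let ?S = "(\<lambda>i. rw \<xi> i \<omega>) ` {..<n}"
  have "Min ?S \<in> ?S" using \<open>n \<noteq> 0\<close> by (intro Min_in) auto
  then obtain i0 where "i0 < n" "rw \<xi> i0 \<omega> = Min ?S" by auto
  then have "P i0" unfolding P_def using Min_le[of ?S] by auto
  define k where "k = Greatest P"
  have Pk: "P k" unfolding k_def by (rule GreatestI_nat[of P i0 n]) (use \<open>P i0\<close> in \<open>auto simp: P_def\<close>)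
  have k_max: "j \<le> k" if "P j" for j
    unfolding k_def using that by (rule Greatest_le_nat[of P _ n]) (auto simp: P_def)
  have later: "rw \<xi> k \<omega> < rw \<xi> j \<omega>" if j: "k < j" "j < n" for j
  proof -
    have "\<not> P j" using j(1) k_max leD by blast
    then obtain l where "l < n" "rw \<xi> l \<omega> < rw \<xi> j \<omega>"
      using j(2) unfolding P_def not_le[symmetric] by blast
    moreover have "rw \<xi> k \<omega> \<le> rw \<xi> l \<omega>" using Pk \<open>l < n\<close> unfolding P_def by auto
    ultimately show ?thesis by simp
  qed
  have kn: "k < n" using Pk by (simp add: P_def)
  have "exits_at \<xi> (y - rw \<xi> k \<omega>) (h y - rw \<xi> k \<omega>) k 0 (n - k) \<omega>"
    unfolding exits_at_def rw_incr_def
  proof (intro conjI allI impI)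
    fix i assume i: "1 \<le> i \<and> i < n - k"
    show "0 < 0 + (rw \<xi> (k + i) \<omega> - rw \<xi> k \<omega>)" using later[of "k + i"] i by auto
    show "0 + (rw \<xi> (k + i) \<omega> - rw \<xi> k \<omega>) \<le> y - rw \<xi> k \<omega>" using below i by auto
  qed (use kn above hy in \<open>auto simp: Suc_leI\<close>)
  then have "\<omega> \<in> exit_event M \<xi> h y k n"
    unfolding exit_event_def exits_above_iff using \<omega> diff_le_self by blast
  moreover have "enat k < \<sigma> \<omega>" using kn \<open>enat n \<le> \<sigma> \<omega>\<close> by (meson enat_ord_simps(2) less_le_trans)
  then have "\<omega> \<in> ladder_event M \<xi> \<sigma> k" using Pk \<omega> unfolding P_def ladder_event_def by auto
  ultimately show "\<omega> \<in> (\<Union>N. \<Union>k<N. ladder_event M \<xi> \<sigma> k \<inter> exit_event M \<xi> h y k N)"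
    using kn by blast
qed

lemma sum_emeasure_enat_less_le_nn_integral:
  fixes \<sigma> :: "'a \<Rightarrow> enat"
  assumes meas: "\<And>k. {\<omega>\<in>space M. enat k < \<sigma> \<omega>} \<in> sets M"
  shows "(\<Sum>k<K. emeasure M {\<omega>\<in>space M. enat k < \<sigma> \<omega>}) \<le> (\<integral>\<^sup>+\<omega>. ennreal_of_enat (\<sigma> \<omega>) \<partial>M)"
proof -
  have count: "(\<Sum>k<K. indicator {\<omega>\<in>space M. enat k < \<sigma> \<omega>} \<omega>) \<le> ennreal_of_enat (\<sigma> \<omega>)"
    if "\<omega> \<in> space M" for \<omega>
  proof (cases "\<sigma> \<omega>")
    case (enat s)
    have "(\<Sum>k<K. indicator {\<omega>\<in>space M. enat k < \<sigma> \<omega>} \<omega>) = (\<Sum>k\<in>{..<K} \<inter> {..<s}. 1::ennreal)"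
      using that enat by (simp add: indicator_def sum.inter_restrict lessThan_def)
    also have "\<dots> \<le> of_nat s"
      using card_mono[of "{..<s}" "{..<K} \<inter> {..<s}"] by simp
    finally show ?thesis using enat by simp
  qed simp
  have "(\<Sum>k<K. emeasure M {\<omega>\<in>space M. enat k < \<sigma> \<omega>})
      = (\<integral>\<^sup>+\<omega>. (\<Sum>k<K. indicator {\<omega>\<in>space M. enat k < \<sigma> \<omega>} \<omega>) \<partial>M)"
    using meas by (simp add: nn_integral_sum)
  also have "\<dots> \<le> (\<integral>\<^sup>+\<omega>. ennreal_of_enat (\<sigma> \<omega>) \<partial>M)"
    by (rule nn_integral_mono) (rule count)
  finally show ?thesis .
qed

locale rw_filtration = prob_space M for M :: "'a measure" +
  fixes \<xi> :: "nat \<Rightarrow> 'a \<Rightarrow> real" and F :: "nat \<Rightarrow> 'a measure"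
  assumes admissible: "admissible_filtration M \<xi> F"
    and ident: "\<forall>n\<ge>1. distr M borel (\<xi> n) = distr M borel (\<xi> 1)"
begin

abbreviation "D \<equiv> distr M borel (\<xi> 1)"

lemma subalgebra_F: "subalgebra M (F n)"
  using admissible unfolding admissible_filtration_def by auto

lemma space_F [simp]: "space (F n) = space M"
  using subalgebra_F unfolding subalgebra_def by auto

lemma sets_F_subset: "sets (F n) \<subseteq> sets M"
  using subalgebra_F unfolding subalgebra_def by auto

lemma measurable_F_mono: "f \<in> measurable (F n) N \<Longrightarrow> n \<le> m \<Longrightarrow> f \<in> measurable (F m) N"
  using admissible unfolding admissible_filtration_def
  by (intro measurable_from_subalg[of "F m" "F n"]) (auto simp: subalgebra_def)

lemma measurable_F_imp_M: "f \<in> measurable (F n) N \<Longrightarrow> f \<in> measurable M N"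
  by (rule measurable_from_subalg[OF subalgebra_F])

lemma xi_measurable_F: "1 \<le> n \<Longrightarrow> n \<le> m \<Longrightarrow> \<xi> n \<in> borel_measurable (F m)"
  using admissible unfolding admissible_filtration_def by (auto intro: measurable_F_mono)

lemma xi_measurable [measurable]: "\<xi> (Suc n) \<in> borel_measurable M"
  by (rule measurable_F_imp_M[OF xi_measurable_F[OF _ order_refl]]) simp

lemma prob_space_D: "prob_space D"
  using xi_measurable[of 0] by (intro prob_space_distr) simp

lemma rw_measurable_F: "i \<le> k \<Longrightarrow> rw \<xi> i \<in> borel_measurable (F k)"
  unfolding rw_def by (intro borel_measurable_sum xi_measurable_F) auto

lemma rw_measurable [measurable]: "rw \<xi> i \<in> borel_measurable M"
  by (rule measurable_F_imp_M[OF rw_measurable_F[OF order_refl]])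

lemma id_measurable_F: "(\<lambda>\<omega>. \<omega>) \<in> measurable M (F k)"
  by (rule measurableI) (use sets_F_subset in \<open>auto dest: sets.sets_into_space\<close>)

text \<open>This is where the independence of \<open>\<xi>(k+1)\<close> from \<open>F k\<close> enters.\<close>

lemma distr_pair_xi_Suc:
  "distr M (F k) (\<lambda>\<omega>. \<omega>) \<Otimes>\<^sub>M D = distr M (F k \<Otimes>\<^sub>M borel) (\<lambda>\<omega>. (\<omega>, \<xi> (Suc k) \<omega>))"
proof -
  have indep: "prob (A \<inter> B) = prob A * prob B"
    if "A \<in> sets (F k)" "B \<in> {\<xi> (Suc k) -` A \<inter> space M | A. A \<in> sets borel}" for A B
    using admissible that unfolding admissible_filtration_def indep_sets2_eq by blast
  have Dk: "distr M borel (\<xi> (Suc k)) = D" using ident[rule_format, of "Suc k"] by simp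
  have pair: "(\<lambda>\<omega>. (\<omega>, \<xi> (Suc k) \<omega>)) \<in> measurable M (F k \<Otimes>\<^sub>M borel)"
    using id_measurable_F by (intro measurable_Pair) auto
  interpret Mk: prob_space "distr M (F k) (\<lambda>\<omega>. \<omega>)" by (rule prob_space_distr[OF id_measurable_F])
  interpret Dp: prob_space D by (rule prob_space_D)
  show ?thesis
  proof (rule pair_measure_eqI)
    show "sigma_finite_measure (distr M (F k) (\<lambda>\<omega>. \<omega>))" "sigma_finite_measure D" ..
    show "sets (distr M (F k) (\<lambda>\<omega>. \<omega>) \<Otimes>\<^sub>M D) = sets (distr M (F k \<Otimes>\<^sub>M borel) (\<lambda>\<omega>. (\<omega>, \<xi> (Suc k) \<omega>)))"
      by (simp cong: sets_pair_measure_cong)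
    fix A B assume "A \<in> sets (distr M (F k) (\<lambda>\<omega>. \<omega>))" and B: "B \<in> sets D"
    then have A: "A \<in> sets (F k)" "A \<inter> space M = A"
      using sets.sets_into_space[of A "F k"] by auto
    have "emeasure (distr M (F k \<Otimes>\<^sub>M borel) (\<lambda>\<omega>. (\<omega>, \<xi> (Suc k) \<omega>))) (A \<times> B)
        = emeasure M (A \<inter> (\<xi> (Suc k) -` B \<inter> space M))"
      using A B by (subst emeasure_distr[OF pair]) (auto intro!: arg_cong[where f="emeasure M"])
    also have "\<dots> = ennreal (prob A * prob (\<xi> (Suc k) -` B \<inter> space M))"
      using indep[of A "\<xi> (Suc k) -` B \<inter> space M"] A B by (auto simp: emeasure_eq_measure)
    also have "\<dots> = emeasure (distr M (F k) (\<lambda>\<omega>. \<omega>)) A * emeasure D B"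
    proof -
      have "emeasure (distr M (F k) (\<lambda>\<omega>. \<omega>)) A = emeasure M A"
        using emeasure_distr[OF id_measurable_F A(1)] A(2) by simp
      moreover have "emeasure D B = emeasure M (\<xi> (Suc k) -` B \<inter> space M)"
        using emeasure_distr[OF xi_measurable, of B k] B Dk by simp
      ultimately show ?thesis by (simp add: emeasure_eq_measure ennreal_mult)
    qed
    finally show "emeasure (distr M (F k) (\<lambda>\<omega>. \<omega>)) A * emeasure D B =
        emeasure (distr M (F k \<Otimes>\<^sub>M borel) (\<lambda>\<omega>. (\<omega>, \<xi> (Suc k) \<omega>))) (A \<times> B)" by simp
  qed
qed

lemma nn_integral_next_step:
  assumes f: "f \<in> borel_measurable (F k \<Otimes>\<^sub>M borel)"
  shows "(\<integral>\<^sup>+\<omega>. f (\<omega>, \<xi> (Suc k) \<omega>) \<partial>M) = (\<integral>\<^sup>+\<omega>. (\<integral>\<^sup>+y. f (\<omega>, y) \<partial>D) \<partial>M)"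
proof -
  let ?Mk = "distr M (F k) (\<lambda>\<omega>. \<omega>)"
  interpret Dp: prob_space D by (rule prob_space_D)
  have pair: "(\<lambda>\<omega>. (\<omega>, \<xi> (Suc k) \<omega>)) \<in> measurable M (F k \<Otimes>\<^sub>M borel)"
    using id_measurable_F by (intro measurable_Pair) auto
  have f': "f \<in> borel_measurable (?Mk \<Otimes>\<^sub>M D)"
    using f by (subst measurable_cong_sets[OF sets_pair_measure_cong]) auto
  have "(\<integral>\<^sup>+\<omega>. f (\<omega>, \<xi> (Suc k) \<omega>) \<partial>M)
      = (\<integral>\<^sup>+z. f z \<partial>distr M (F k \<Otimes>\<^sub>M borel) (\<lambda>\<omega>. (\<omega>, \<xi> (Suc k) \<omega>)))"
    using pair f by (subst nn_integral_distr) auto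
  also have "\<dots> = (\<integral>\<^sup>+z. f z \<partial>(?Mk \<Otimes>\<^sub>M D))" by (simp only: distr_pair_xi_Suc)
  also have "\<dots> = (\<integral>\<^sup>+\<omega>. (\<integral>\<^sup>+y. f (\<omega>, y) \<partial>D) \<partial>?Mk)"
    by (rule Dp.nn_integral_fst[symmetric, OF f'])
  also have "\<dots> = (\<integral>\<^sup>+\<omega>. (\<integral>\<^sup>+y. f (\<omega>, y) \<partial>D) \<partial>M)"
    using Dp.borel_measurable_nn_integral_fst[OF f'] by (rule nn_integral_distr[OF id_measurable_F])
  finally show ?thesis .
qed

lemma borel_measurable_exit_prob_D:
  "f \<in> borel_measurable N0 \<Longrightarrow> g \<in> borel_measurable N0 \<Longrightarrow> w \<in> borel_measurable N0 \<Longrightarrow>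
   (\<lambda>x. exit_prob D n (f x) (g x) (w x)) \<in> borel_measurable N0"
  using prob_space_D by (intro borel_measurable_exit_prob prob_space_imp_sigma_finite) auto

lemma pred_exits_above_M:
  "Lf \<in> borel_measurable M \<Longrightarrow> Hf \<in> borel_measurable M \<Longrightarrow> Wf \<in> borel_measurable M \<Longrightarrow>
    Measurable.pred M (\<lambda>\<omega>. exits_above \<xi> (Lf \<omega>) (Hf \<omega>) k N (Wf \<omega>) \<omega>)"
  by (rule pred_exits_above) (rule xi_measurable)

lemma nn_integral_exit_prob_Suc:
  assumes [measurable]: "G \<in> borel_measurable (F k)" "Lf \<in> borel_measurable (F k)"
    "Hf \<in> borel_measurable (F k)" "Wf \<in> borel_measurable (F k)"
  shows "(\<integral>\<^sup>+\<omega>. G \<omega> * exit_prob D (Suc N) (Lf \<omega>) (Hf \<omega>) (Wf \<omega>) \<partial>M)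
    = (\<integral>\<^sup>+\<omega>. G \<omega> * ((if Lf \<omega> < Wf \<omega> + \<xi> (Suc k) \<omega> \<and> Hf \<omega> < Wf \<omega> then 1 else 0)
        + (if 0 < Wf \<omega> + \<xi> (Suc k) \<omega> \<and> Wf \<omega> + \<xi> (Suc k) \<omega> \<le> Lf \<omega>
           then exit_prob D N (Lf \<omega>) (Hf \<omega>) (Wf \<omega> + \<xi> (Suc k) \<omega>) else 0)) \<partial>M)"
proof -
  define g where "g z = G (fst z) * ((if Lf (fst z) < Wf (fst z) + snd z \<and> Hf (fst z) < Wf (fst z) then 1 else 0)
      + (if 0 < Wf (fst z) + snd z \<and> Wf (fst z) + snd z \<le> Lf (fst z)
         then exit_prob D N (Lf (fst z)) (Hf (fst z)) (Wf (fst z) + snd z) else 0))" for z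
  have [measurable]: "(\<lambda>z. exit_prob D N (Lf (fst z)) (Hf (fst z)) (Wf (fst z) + snd z))
      \<in> borel_measurable (F k \<Otimes>\<^sub>M borel)"
    by (rule borel_measurable_exit_prob_D) measurable
  have "g \<in> borel_measurable (F k \<Otimes>\<^sub>M borel)"
    unfolding g_def by measurable
  then have next_step: "(\<integral>\<^sup>+\<omega>. g (\<omega>, \<xi> (Suc k) \<omega>) \<partial>M) = (\<integral>\<^sup>+\<omega>. (\<integral>\<^sup>+y. g (\<omega>, y) \<partial>D) \<partial>M)"
    by (rule nn_integral_next_step)
  have "(\<integral>\<^sup>+\<omega>. G \<omega> * exit_prob D (Suc N) (Lf \<omega>) (Hf \<omega>) (Wf \<omega>) \<partial>M) = (\<integral>\<^sup>+\<omega>. (\<integral>\<^sup>+y. g (\<omega>, y) \<partial>D) \<partial>M)"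
  proof (rule nn_integral_cong)
    fix \<omega>
    have [measurable]: "(\<lambda>y. exit_prob D N (Lf \<omega>) (Hf \<omega>) (Wf \<omega> + y)) \<in> borel_measurable borel"
      by (rule borel_measurable_exit_prob_D) measurable
    show "G \<omega> * exit_prob D (Suc N) (Lf \<omega>) (Hf \<omega>) (Wf \<omega>) = (\<integral>\<^sup>+y. g (\<omega>, y) \<partial>D)"
      unfolding g_def fst_conv snd_conv exit_prob.simps by (rule nn_integral_cmult[symmetric]) measurable
  qed
  also have "\<dots> = (\<integral>\<^sup>+\<omega>. g (\<omega>, \<xi> (Suc k) \<omega>) \<partial>M)"
    by (rule next_step[symmetric])
  finally show ?thesis
    unfolding g_def fst_conv snd_conv .
qed

text \<open>Markov property at time \<open>k\<close>.\<close>

lemma nn_integral_exits_above: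
  "G \<in> borel_measurable (F k) \<Longrightarrow> Lf \<in> borel_measurable (F k) \<Longrightarrow> Hf \<in> borel_measurable (F k) \<Longrightarrow>
   Wf \<in> borel_measurable (F k) \<Longrightarrow>
   (\<integral>\<^sup>+\<omega>. G \<omega> * (if exits_above \<xi> (Lf \<omega>) (Hf \<omega>) k N (Wf \<omega>) \<omega> then 1 else 0) \<partial>M)
     = (\<integral>\<^sup>+\<omega>. G \<omega> * exit_prob D N (Lf \<omega>) (Hf \<omega>) (Wf \<omega>) \<partial>M)"
proof (induction N arbitrary: k G Wf)
  case 0 then show ?case by simp
next
  case (Suc N)
  have lift: "f \<in> borel_measurable (F (Suc k))" if "f \<in> borel_measurable (F k)" for f :: "'a \<Rightarrow> 'b::topological_space"
    using that by (rule measurable_F_mono) simp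
  have [measurable]: "Lf \<in> borel_measurable (F (Suc k))" "Hf \<in> borel_measurable (F (Suc k))"
    "Wf \<in> borel_measurable (F (Suc k))" "G \<in> borel_measurable (F (Suc k))"
    "\<xi> (Suc k) \<in> borel_measurable (F (Suc k))"
    using Suc.prems by (auto intro: lift xi_measurable_F)
  have [measurable]: "Lf \<in> borel_measurable M" "Hf \<in> borel_measurable M"
    "Wf \<in> borel_measurable M" "G \<in> borel_measurable M"
    using Suc.prems by (auto intro: measurable_F_imp_M)
  define W' where "W' \<omega> = Wf \<omega> + \<xi> (Suc k) \<omega>" for \<omega>
  define C1 where "C1 \<omega> \<longleftrightarrow> Lf \<omega> < W' \<omega> \<and> Hf \<omega> < Wf \<omega>" for \<omega>
  define G' where "G' \<omega> = G \<omega> * (if 0 < W' \<omega> \<and> W' \<omega> \<le> Lf \<omega> then 1 else 0)" for \<omega>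
  have [measurable]: "G' \<in> borel_measurable (F (Suc k))" "W' \<in> borel_measurable (F (Suc k))"
    unfolding G'_def W'_def by measurable
  have [measurable]: "G' \<in> borel_measurable M" "W' \<in> borel_measurable M" "Measurable.pred M C1"
    unfolding G'_def W'_def C1_def by measurable
  have [measurable]: "Measurable.pred M (\<lambda>\<omega>. exits_above \<xi> (Lf \<omega>) (Hf \<omega>) (Suc k) N (W' \<omega>) \<omega>)"
    by (rule pred_exits_above_M) measurable
  have [measurable]: "(\<lambda>\<omega>. exit_prob D N (Lf \<omega>) (Hf \<omega>) (W' \<omega>)) \<in> borel_measurable M"
    by (rule borel_measurable_exit_prob_D) measurable
  have IH: "(\<integral>\<^sup>+\<omega>. G' \<omega> * (if exits_above \<xi> (Lf \<omega>) (Hf \<omega>) (Suc k) N (W' \<omega>) \<omega> then 1 else 0) \<partial>M)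
      = (\<integral>\<^sup>+\<omega>. G' \<omega> * exit_prob D N (Lf \<omega>) (Hf \<omega>) (W' \<omega>) \<partial>M)"
    by (rule Suc.IH) measurable
  have "(\<integral>\<^sup>+\<omega>. G \<omega> * (if exits_above \<xi> (Lf \<omega>) (Hf \<omega>) k (Suc N) (Wf \<omega>) \<omega> then 1 else 0) \<partial>M)
      = (\<integral>\<^sup>+\<omega>. G \<omega> * (if C1 \<omega> then 1 else 0)
          + G' \<omega> * (if exits_above \<xi> (Lf \<omega>) (Hf \<omega>) (Suc k) N (W' \<omega>) \<omega> then 1 else 0) \<partial>M)"
    by (rule nn_integral_cong) (auto simp: C1_def G'_def W'_def)
  also have "\<dots> = (\<integral>\<^sup>+\<omega>. G \<omega> * (if C1 \<omega> then 1 else 0) \<partial>M)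
      + (\<integral>\<^sup>+\<omega>. G' \<omega> * (if exits_above \<xi> (Lf \<omega>) (Hf \<omega>) (Suc k) N (W' \<omega>) \<omega> then 1 else 0) \<partial>M)"
    by (rule nn_integral_add) measurable
  also have "\<dots> = (\<integral>\<^sup>+\<omega>. G \<omega> * (if C1 \<omega> then 1 else 0) \<partial>M)
      + (\<integral>\<^sup>+\<omega>. G' \<omega> * exit_prob D N (Lf \<omega>) (Hf \<omega>) (W' \<omega>) \<partial>M)"
    by (simp only: IH)
  also have "\<dots> = (\<integral>\<^sup>+\<omega>. G \<omega> * (if C1 \<omega> then 1 else 0) + G' \<omega> * exit_prob D N (Lf \<omega>) (Hf \<omega>) (W' \<omega>) \<partial>M)"
    by (rule nn_integral_add[symmetric]) measurable
  also have "\<dots> = (\<integral>\<^sup>+\<omega>. G \<omega> * exit_prob D (Suc N) (Lf \<omega>) (Hf \<omega>) (Wf \<omega>) \<partial>M)"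
    unfolding nn_integral_exit_prob_Suc[OF Suc.prems]
    by (rule nn_integral_cong) (simp add: C1_def G'_def W'_def distrib_left)
  finally show ?case .
qed

lemma A2_tau_sets: "A2 M \<xi> h (tau \<xi>) L \<in> sets M"
proof -
  have "A2 M \<xi> h (tau \<xi>) L = {\<omega>\<in>space M. \<exists>n. ((\<forall>i<n. rw \<xi> i \<omega> \<le> L) \<and> L < rw \<xi> n \<omega>)
      \<and> (\<forall>i. 1 \<le> i \<and> i < n \<longrightarrow> 0 < rw \<xi> i \<omega>) \<and> h L < rw \<xi> (n - 1) \<omega>}"
    unfolding A2_def mu_eq_enat_iff[symmetric] enat_le_tau_iff[symmetric] ..
  also have "\<dots> \<in> sets M" by measurable
  finally show ?thesis .
qed

lemma Fbar_antimono: "y \<le> L \<Longrightarrow> Fbar M \<xi> L \<le> Fbar M \<xi> y"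
  unfolding Fbar_def using xi_measurable[of 0] by (intro finite_measure_mono) auto

lemma exit_prob_le_A2_tau:
  assumes "0 \<le> L" "h L \<le> H"
  shows "exit_prob D N L H 0 \<le> emeasure M (A2 M \<xi> h (tau \<xi>) L)"
proof -
  let ?E = "{\<omega>\<in>space M. exits_above \<xi> L H 0 N 0 \<omega>}"
  have E: "?E \<in> sets M"
    using pred_exits_above_M[of "\<lambda>_. L" "\<lambda>_. H" "\<lambda>_. 0" 0 N] by (simp add: pred_def)
  have "(\<integral>\<^sup>+\<omega>. 1 * (if exits_above \<xi> L H 0 N 0 \<omega> then 1 else 0) \<partial>M) = (\<integral>\<^sup>+\<omega>. 1 * exit_prob D N L H 0 \<partial>M)"
    by (rule nn_integral_exits_above) auto
  then have "exit_prob D N L H 0 = emeasure M ?E"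
    using E by (simp add: emeasure_space_1 nn_integral_indicator[symmetric] indicator_def of_bool_def
        cong: nn_integral_cong_simp)
  also have "\<dots> \<le> emeasure M (A2 M \<xi> h (tau \<xi>) L)"
    using exits_above_from_0_in_A2_tau[where h=h and M=M and \<xi>=\<xi>, OF assms] by (intro emeasure_mono A2_tau_sets) blast
  finally show ?thesis .
qed

lemma stopping_time_less_sets:
  assumes "stopping_time_enat M F \<sigma>"
  shows "{\<omega>\<in>space M. enat k < \<sigma> \<omega>} \<in> sets (F k)"
proof -
  have "space (F k) - {\<omega>\<in>space M. \<sigma> \<omega> \<le> enat k} \<in> sets (F k)"
    using assms unfolding stopping_time_enat_def by blast
  also have "space (F k) - {\<omega>\<in>space M. \<sigma> \<omega> \<le> enat k} = {\<omega>\<in>space M. enat k < \<sigma> \<omega>}"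
    by (auto simp: not_le)
  finally show ?thesis .
qed

lemma ladder_event_sets_F:
  assumes "stopping_time_enat M F \<sigma>"
  shows "ladder_event M \<xi> \<sigma> k \<in> sets (F k)"
proof -
  have [measurable]: "rw \<xi> l \<in> borel_measurable (F k)" if "l \<le> k" for l
    using that by (rule rw_measurable_F)
  have "Measurable.pred (F k) (\<lambda>\<omega>. \<forall>l\<in>{..k}. rw \<xi> k \<omega> \<le> rw \<xi> l \<omega>)"
    by (intro pred_intros_countable_bounded(3)) measurable
  then have "{\<omega>\<in>space (F k). \<forall>l\<in>{..k}. rw \<xi> k \<omega> \<le> rw \<xi> l \<omega>} \<in> sets (F k)"
    by (simp only: pred_def)
  moreover have "{\<omega>\<in>space (F k). \<forall>l\<in>{..k}. rw \<xi> k \<omega> \<le> rw \<xi> l \<omega>}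
      = {\<omega>\<in>space M. \<forall>l\<le>k. rw \<xi> k \<omega> \<le> rw \<xi> l \<omega>}"
    by auto
  ultimately have "{\<omega>\<in>space M. \<forall>l\<le>k. rw \<xi> k \<omega> \<le> rw \<xi> l \<omega>} \<in> sets (F k)"
    by (simp only:)
  moreover have "{\<omega>\<in>space M. enat k < \<sigma> \<omega> \<and> (\<forall>l\<le>k. rw \<xi> k \<omega> \<le> rw \<xi> l \<omega>)}
      = {\<omega>\<in>space M. enat k < \<sigma> \<omega>} \<inter> {\<omega>\<in>space M. \<forall>l\<le>k. rw \<xi> k \<omega> \<le> rw \<xi> l \<omega>}"
    by auto
  ultimately show ?thesis
    using sets.Int[OF stopping_time_less_sets[OF assms]] by (simp only: ladder_event_def)
qed

lemma exit_event_sets: "exit_event M \<xi> h y k N \<in> sets M"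
  using pred_exits_above_M[of "\<lambda>\<omega>. y - rw \<xi> k \<omega>" "\<lambda>\<omega>. h y - rw \<xi> k \<omega>" "\<lambda>_. 0" k N]
  by (simp add: exit_event_def pred_def)

lemma emeasure_exit_after_ladder_le:
  assumes B: "B \<in> sets (F k)" "\<And>\<omega>. \<omega> \<in> B \<Longrightarrow> rw \<xi> k \<omega> \<le> 0"
    and h4: "\<forall>x\<ge>x0. \<forall>t\<ge>0. h (x + t) \<le> h x + t" and y: "x0 \<le> y" "0 \<le> y"
    and c: "\<And>L. y \<le> L \<Longrightarrow> measure M (A2 M \<xi> h (tau \<xi>) L) \<le> c"
  shows "emeasure M (B \<inter> exit_event M \<xi> h y k N) \<le> ennreal c * emeasure M B"
proof -
  have [measurable]: "rw \<xi> k \<in> borel_measurable (F k)" "B \<in> sets (F k)"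
    using B(1) by (auto intro: rw_measurable_F)
  have BM: "B \<in> sets M" using B(1) sets_F_subset by blast
  have exit_prob_le: "exit_prob D N (y - rw \<xi> k \<omega>) (h y - rw \<xi> k \<omega>) 0 \<le> ennreal c" if "\<omega> \<in> B" for \<omega>
  proof -
    define L where "L = y - rw \<xi> k \<omega>"
    have L: "0 \<le> L" "y \<le> L" using B(2)[OF that] y unfolding L_def by auto
    have "h L \<le> h y - rw \<xi> k \<omega>"
      using h4[rule_format, OF y(1), of "- rw \<xi> k \<omega>"] B(2)[OF that] unfolding L_def by simp
    then have "exit_prob D N L (h y - rw \<xi> k \<omega>) 0 \<le> emeasure M (A2 M \<xi> h (tau \<xi>) L)"
      using L(1) by (rule exit_prob_le_A2_tau[rotated])
    also have "\<dots> \<le> ennreal c"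
      using c[OF L(2)] A2_tau_sets by (simp add: emeasure_eq_measure ennreal_leI)
    finally show ?thesis unfolding L_def .
  qed
  have "emeasure M (B \<inter> exit_event M \<xi> h y k N) = (\<integral>\<^sup>+\<omega>. indicator (B \<inter> exit_event M \<xi> h y k N) \<omega> \<partial>M)"
    using BM exit_event_sets by (simp add: nn_integral_indicator)
  also have "\<dots> = (\<integral>\<^sup>+\<omega>. indicator B \<omega> *
      (if exits_above \<xi> (y - rw \<xi> k \<omega>) (h y - rw \<xi> k \<omega>) k N 0 \<omega> then 1 else 0) \<partial>M)"
    by (rule nn_integral_cong) (simp add: indicator_def exit_event_def)
  also have "\<dots> = (\<integral>\<^sup>+\<omega>. indicator B \<omega> * exit_prob D N (y - rw \<xi> k \<omega>) (h y - rw \<xi> k \<omega>) 0 \<partial>M)"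
    by (rule nn_integral_exits_above) measurable
  also have "\<dots> \<le> (\<integral>\<^sup>+\<omega>. ennreal c * indicator B \<omega> \<partial>M)"
  proof (rule nn_integral_mono)
    fix \<omega>
    show "indicator B \<omega> * exit_prob D N (y - rw \<xi> k \<omega>) (h y - rw \<xi> k \<omega>) 0 \<le> ennreal c * indicator B \<omega>"
      using exit_prob_le[of \<omega>] by (cases "\<omega> \<in> B") simp_all
  qed
  also have "\<dots> = ennreal c * emeasure M B"
    using BM by (rule nn_integral_cmult_indicator)
  finally show ?thesis .
qed

lemma emeasure_UN_ladder_exit_le:
  assumes stop: "stopping_time_enat M F \<sigma>"
    and mean: "(\<integral>\<^sup>+\<omega>. ennreal_of_enat (\<sigma> \<omega>) \<partial>M) = ennreal Er" and "0 \<le> Er"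
    and h4: "\<forall>x\<ge>x0. \<forall>t\<ge>0. h (x + t) \<le> h x + t" and y: "x0 \<le> y" "0 \<le> y"
    and c: "0 \<le> c" "\<And>L. y \<le> L \<Longrightarrow> measure M (A2 M \<xi> h (tau \<xi>) L) \<le> c"
  shows "emeasure M (\<Union>k<N. ladder_event M \<xi> \<sigma> k \<inter> exit_event M \<xi> h y k N) \<le> ennreal (c * Er)"
proof -
  have less_M: "{\<omega>\<in>space M. enat k < \<sigma> \<omega>} \<in> sets M" for k
    using stopping_time_less_sets[OF stop] sets_F_subset by blast
  have ladder_M: "ladder_event M \<xi> \<sigma> k \<in> sets M" for k
    using ladder_event_sets_F[OF stop] sets_F_subset by blast
  have "emeasure M (\<Union>k<N. ladder_event M \<xi> \<sigma> k \<inter> exit_event M \<xi> h y k N)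
      \<le> (\<Sum>k<N. emeasure M (ladder_event M \<xi> \<sigma> k \<inter> exit_event M \<xi> h y k N))"
    using ladder_M exit_event_sets by (intro emeasure_subadditive_finite) auto
  also have "\<dots> \<le> (\<Sum>k<N. ennreal c * emeasure M {\<omega>\<in>space M. enat k < \<sigma> \<omega>})"
  proof (rule sum_mono)
    fix k
    have "emeasure M (ladder_event M \<xi> \<sigma> k \<inter> exit_event M \<xi> h y k N)
        \<le> ennreal c * emeasure M (ladder_event M \<xi> \<sigma> k)"
      using ladder_event_sets_F[OF stop]
      by (rule emeasure_exit_after_ladder_le[OF _ _ h4 y c(2)]) (auto simp: ladder_event_def)
    also have "\<dots> \<le> ennreal c * emeasure M {\<omega>\<in>space M. enat k < \<sigma> \<omega>}"
      using less_M by (intro mult_left_mono emeasure_mono) (auto simp: ladder_event_def)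
    finally show "emeasure M (ladder_event M \<xi> \<sigma> k \<inter> exit_event M \<xi> h y k N)
        \<le> ennreal c * emeasure M {\<omega>\<in>space M. enat k < \<sigma> \<omega>}" .
  qed
  also have "\<dots> \<le> ennreal c * ennreal Er"
    using sum_emeasure_enat_less_le_nn_integral[OF less_M, of N] mean
    by (simp add: sum_distrib_left[symmetric] mult_left_mono)
  finally show ?thesis
    using c(1) \<open>0 \<le> Er\<close> by (simp add: ennreal_mult)
qed

lemma measure_A2_le:
  assumes stop: "stopping_time_enat M F \<sigma>"
    and mean: "(\<integral>\<^sup>+\<omega>. ennreal_of_enat (\<sigma> \<omega>) \<partial>M) = ennreal Er" and "0 \<le> Er"
    and h4: "\<forall>x\<ge>x0. \<forall>t\<ge>0. h (x + t) \<le> h x + t" and y: "x0 \<le> y" "0 \<le> y"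
    and c: "0 \<le> c" "\<And>L. y \<le> L \<Longrightarrow> measure M (A2 M \<xi> h (tau \<xi>) L) \<le> c"
  shows "measure M (A2 M \<xi> h \<sigma> y) \<le> c * Er"
proof -
  define U where "U N = (\<Union>k<N. ladder_event M \<xi> \<sigma> k \<inter> exit_event M \<xi> h y k N)" for N
  have U_M: "U N \<in> sets M" for N
    unfolding U_def using ladder_event_sets_F[OF stop] sets_F_subset exit_event_sets by blast
  have "incseq U"
    unfolding U_def using exit_event_Suc_mono by (intro incseq_SucI) fastforce
  have "A2 M \<xi> h \<sigma> y \<subseteq> (\<Union>N. U N)"
    unfolding U_def by (rule A2_subset_UN_ladder_exit[OF y(2)])
  then have "emeasure M (A2 M \<xi> h \<sigma> y) \<le> emeasure M (\<Union>N. U N)"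
    using U_M by (intro emeasure_mono) auto
  also have "\<dots> = (SUP N. emeasure M (U N))"
    using \<open>incseq U\<close> U_M by (intro SUP_emeasure_incseq[symmetric]) auto
  also have "\<dots> \<le> ennreal (c * Er)"
    unfolding U_def by (intro SUP_least emeasure_UN_ladder_exit_le[OF assms])
  finally show ?thesis
    using c(1) \<open>0 \<le> Er\<close> by (simp add: emeasure_eq_measure ennreal_le_iff)
qed

lemma delta_le_mean_mult_delta_tau:
  assumes stop: "stopping_time_enat M F \<sigma>"
    and mean: "(\<integral>\<^sup>+\<omega>. ennreal_of_enat (\<sigma> \<omega>) \<partial>M) = ennreal Er" and "0 \<le> Er"
    and Fbar_pos: "\<forall>x. Fbar M \<xi> x > 0"
    and h4: "\<forall>x\<ge>x0. \<forall>t\<ge>0. h (x + t) \<le> h x + t" and x: "x0 \<le> x" "0 \<le> x"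
    and finite: "\<bar>delta M \<xi> h (tau \<xi>) x\<bar> \<noteq> \<infinity>"
  shows "delta M \<xi> h \<sigma> x \<le> ereal Er * delta M \<xi> h (tau \<xi>) x"
proof -
  define d where "d = real_of_ereal (delta M \<xi> h (tau \<xi>) x)"
  have delta_tau: "delta M \<xi> h (tau \<xi>) x = ereal d"
    unfolding d_def using finite by (simp add: ereal_real)
  have ratio_tau: "measure M (A2 M \<xi> h (tau \<xi>) L) / Fbar M \<xi> L \<le> d" if "x \<le> L" for L
  proof -
    have "ereal (measure M (A2 M \<xi> h (tau \<xi>) L) / Fbar M \<xi> L) \<le> delta M \<xi> h (tau \<xi>) x"
      unfolding delta_def using that by (intro SUP_upper) simp
    then show ?thesis by (simp add: delta_tau)
  qed
  have "0 \<le> d"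
    using ratio_tau[OF order_refl] Fbar_pos by (meson divide_nonneg_pos measure_nonneg order_trans)
  have "ereal (measure M (A2 M \<xi> h \<sigma> y) / Fbar M \<xi> y) \<le> ereal Er * delta M \<xi> h (tau \<xi>) x"
    if "y \<in> {x..}" for y
  proof -
    have bound: "measure M (A2 M \<xi> h (tau \<xi>) L) \<le> d * Fbar M \<xi> y" if "y \<le> L" for L
    proof -
      have "measure M (A2 M \<xi> h (tau \<xi>) L) \<le> d * Fbar M \<xi> L"
        using ratio_tau[of L] Fbar_pos \<open>y \<in> {x..}\<close> that by (simp add: divide_le_eq)
      also have "\<dots> \<le> d * Fbar M \<xi> y"
        using Fbar_antimono[OF that] \<open>0 \<le> d\<close> by (rule mult_left_mono)
      finally show ?thesis .
    qed
    have "measure M (A2 M \<xi> h \<sigma> y) \<le> d * Fbar M \<xi> y * Er"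
      using that x \<open>0 \<le> d\<close> Fbar_pos[rule_format, of y]
      by (intro measure_A2_le[OF stop mean \<open>0 \<le> Er\<close> h4 _ _ _ bound]) auto
    then show ?thesis
      using Fbar_pos by (simp add: delta_tau divide_le_eq algebra_simps)
  qed
  then show ?thesis unfolding delta_def[of M \<xi> h \<sigma>] by (rule SUP_least)
qed

end

lemma delta_nonneg: "0 \<le> delta M \<xi> h \<sigma> x"
proof -
  have "0 \<le> ereal (measure M (A2 M \<xi> h \<sigma> x) / Fbar M \<xi> x)"
    by (simp add: Fbar_def)
  also have "\<dots> \<le> delta M \<xi> h \<sigma> x" unfolding delta_def by (rule SUP_upper) simp
  finally show ?thesis .
qed

theorem lemma4:
  fixes M :: "'a measure" and \<xi> :: "nat \<Rightarrow> 'a \<Rightarrow> real" and h :: "real \<Rightarrow> real"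
    and F :: "nat \<Rightarrow> 'a measure" and \<sigma> :: "'a \<Rightarrow> enat"
  assumes P: "prob_space M"
    and indep: "prob_space.indep_vars M (\<lambda>_. borel) \<xi> {1..}"
    and ident: "\<forall>n\<ge>1. distr M borel (\<xi> n) = distr M borel (\<xi> 1)"
    and integ: "integrable M (\<xi> 1)"
    and neg_mean: "(\<integral>\<omega>. \<xi> 1 \<omega> \<partial>M) < 0"
    and Fbar_pos: "\<forall>x. Fbar M \<xi> x > 0"
    and long_tailed: "\<forall>c>0. ((\<lambda>x. Fbar M \<xi> (x - c) / Fbar M \<xi> x) \<longlongrightarrow> 1) at_top"
    and h1: "\<forall>x\<ge>0. 0 \<le> h x \<and> h x \<le> x / 2"
    and h2: "filterlim h at_top at_top"
    and h3: "((\<lambda>x. Fbar M \<xi> (x - h x) / Fbar M \<xi> x) \<longlongrightarrow> 1) at_top"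
    and h4: "\<exists>x0. \<forall>x\<ge>x0. \<forall>t\<ge>0. h (x + t) \<le> h x + t"
    and delta_tau: "((\<lambda>x. delta M \<xi> h (tau \<xi>) x) \<longlongrightarrow> 0) at_top"
    and filt: "admissible_filtration M \<xi> F"
    and stop: "stopping_time_enat M F \<sigma>"
    and finite_mean: "(\<integral>\<^sup>+\<omega>. ennreal_of_enat (\<sigma> \<omega>) \<partial>M) < \<infinity>"
  shows "((\<lambda>x. delta M \<xi> h \<sigma> x) \<longlongrightarrow> 0) at_top"
proof -
  interpret rw_filtration M \<xi> F
    unfolding rw_filtration_def rw_filtration_axioms_def using P filt ident by blast
  obtain x0 where x0: "\<forall>x\<ge>x0. \<forall>t\<ge>0. h (x + t) \<le> h x + t" using h4 by blast
  define Er where "Er = enn2real (\<integral>\<^sup>+\<omega>. ennreal_of_enat (\<sigma> \<omega>) \<partial>M)"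
  have mean: "(\<integral>\<^sup>+\<omega>. ennreal_of_enat (\<sigma> \<omega>) \<partial>M) = ennreal Er" "0 \<le> Er"
    using finite_mean by (simp_all add: Er_def ennreal_enn2real_if)
  have "\<forall>\<^sub>F x in at_top. delta M \<xi> h (tau \<xi>) x < 1"
    using order_tendstoD(2)[OF delta_tau] by simp
  then have "\<forall>\<^sub>F x in at_top. \<bar>delta M \<xi> h (tau \<xi>) x\<bar> \<noteq> \<infinity>"
    by (rule eventually_mono) (use delta_nonneg[of M \<xi> h "tau \<xi>"] in auto)
  then have "\<forall>\<^sub>F x in at_top. \<bar>delta M \<xi> h (tau \<xi>) x\<bar> \<noteq> \<infinity> \<and> x0 \<le> x \<and> 0 \<le> x"
    by (intro eventually_conj eventually_ge_at_top)
  then have upper: "\<forall>\<^sub>F x in at_top. delta M \<xi> h \<sigma> x \<le> ereal Er * delta M \<xi> h (tau \<xi>) x"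
    by (rule eventually_mono) (auto intro: delta_le_mean_mult_delta_tau[OF stop mean Fbar_pos x0])
  have lim: "((\<lambda>x. ereal Er * delta M \<xi> h (tau \<xi>) x) \<longlongrightarrow> 0) at_top"
    using tendsto_cmult_ereal_general[OF delta_tau, of "ereal Er"] by simp
  show ?thesis
    by (rule tendsto_sandwich[OF _ upper tendsto_const lim]) (simp add: delta_nonneg)
qed

end
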